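(* Let $R$ be a commutative noetherian ring with unit, let $M$ be a finitely generated $R$-module, and let $\mathbf{A}$ be a $k\times l$ matrix with entries in $R$. The following are equivalent: (1) $\mathbf{A}$ is partition regular over $M$; (2) there exists an associated prime $\mathfrak{p}$ of $M$ such that $\mathbf{A}$ is partition regular over the $R$-module $R/\mathfrak{p}$.
   Context: All rings are commutative with unit. For an $R$-module $M$, a $k\times l$ matrix $\mathbf{A}$ over $R$ and an integer $r\ge 1$, $\mathbf{A}$ is partition regular over $M$ for $r$ colours if for every map $\chi\colon M\to\{1,\dots,r\}$ there is $\mathbf{m}=(m_1,\dots,m_l)^{\intercal}\in M^l$ with $\mathbf{A}\mathbf{m}=0$, $\mathbf{m}\neq 0$ and $\chi(m_1)=\dots=\chi(m_l)$. $\mathbf{A}$ is partition regular over $M$ if it is partition regular over $M$ for every number $r\ge1$ of colours. A prime ideal $\mathfrak p$ is an associated prime of $M$ if $\mathfrak p=\mathrm{ann}(m)=\{r\in R: rm=0\}$ for some $m\in M$. *)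

theory Defs
  imports "HOL-Algebra.Module" "HOL-Algebra.QuotRing" "HOL-Algebra.Ring_Divisibility"
begin

text \<open>A k x l matrix over R is a function nat => nat => 'a, entries A i j (i < k, j < l).
  A vector m in M^l is a function nat => 'b, components m j (j < l).\<close>

definition matrix_over :: "('a, 'c) ring_scheme \<Rightarrow> (nat \<Rightarrow> nat \<Rightarrow> 'a) \<Rightarrow> nat \<Rightarrow> nat \<Rightarrow> bool" where
  "matrix_over R A k l \<longleftrightarrow> (\<forall>i<k. \<forall>j<l. A i j \<in> carrier R)"

definition mat_apply :: "('a, 'b) module \<Rightarrow> (nat \<Rightarrow> nat \<Rightarrow> 'a) \<Rightarrow> nat \<Rightarrow> (nat \<Rightarrow> 'b) \<Rightarrow> nat \<Rightarrow> 'b" where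
  "mat_apply M A l m i = finsum M (\<lambda>j. A i j \<odot>\<^bsub>M\<^esub> m j) {..<l}"

definition partition_regular_for ::
  "('a, 'b) module \<Rightarrow> (nat \<Rightarrow> nat \<Rightarrow> 'a) \<Rightarrow> nat \<Rightarrow> nat \<Rightarrow> nat \<Rightarrow> bool" where
  "partition_regular_for M A k l r \<longleftrightarrow>
     (\<forall>\<chi> :: 'b \<Rightarrow> nat. \<chi> ` carrier M \<subseteq> {1..r} \<longrightarrow>
        (\<exists>m :: nat \<Rightarrow> 'b. (\<forall>j<l. m j \<in> carrier M)
           \<and> (\<forall>i<k. mat_apply M A l m i = \<zero>\<^bsub>M\<^esub>)
           \<and> (\<exists>j<l. m j \<noteq> \<zero>\<^bsub>M\<^esub>)
           \<and> (\<exists>c. \<forall>j<l. \<chi> (m j) = c)))"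

definition partition_regular ::
  "('a, 'b) module \<Rightarrow> (nat \<Rightarrow> nat \<Rightarrow> 'a) \<Rightarrow> nat \<Rightarrow> nat \<Rightarrow> bool" where
  "partition_regular M A k l \<longleftrightarrow> (\<forall>r\<ge>1. partition_regular_for M A k l r)"

definition finitely_generated_module :: "('a, 'c) ring_scheme \<Rightarrow> ('a, 'b) module \<Rightarrow> bool" where
  "finitely_generated_module R M \<longleftrightarrow>
     (\<exists>xs. set xs \<subseteq> carrier M \<and>
        (\<forall>x\<in>carrier M. \<exists>c. (\<forall>i<length xs. c i \<in> carrier R) \<and>
            x = finsum M (\<lambda>i. c i \<odot>\<^bsub>M\<^esub> xs ! i) {..<length xs}))"

definition annihilator :: "('a, 'c) ring_scheme \<Rightarrow> ('a, 'b) module \<Rightarrow> 'b \<Rightarrow> 'a set" where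
  "annihilator R M x = {a \<in> carrier R. a \<odot>\<^bsub>M\<^esub> x = \<zero>\<^bsub>M\<^esub>}"

definition associated_prime :: "('a, 'c) ring_scheme \<Rightarrow> ('a, 'b) module \<Rightarrow> 'a set \<Rightarrow> bool" where
  "associated_prime R M P \<longleftrightarrow> primeideal P R \<and> (\<exists>x\<in>carrier M. P = annihilator R M x)"

definition quot_module :: "('a, 'c) ring_scheme \<Rightarrow> 'a set \<Rightarrow> ('a, 'a set) module" where
  "quot_module R I =
     \<lparr> carrier = carrier (R Quot I), monoid.mult = monoid.mult (R Quot I),
       one = one (R Quot I), zero = zero (R Quot I), add = add (R Quot I),
       smult = (\<lambda>a C. (I +>\<^bsub>R\<^esub> a) \<otimes>\<^bsub>R Quot I\<^esub> C) \<rparr>"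

end

(*
  (2) implies (1): if p = ann(x) is an associated prime, r + p |-> r x embeds R/p into M, and
  partition regularity passes from a module to any module containing a copy of it.

  (1) implies (2), by contradiction. Among the submodules N of M such that A is partition regular
  over M/N and every associated prime of M/N is one of M (N = 0 qualifies), Noetherianity yields a
  maximal one, and N is proper. Let q = (N : x0) be maximal among the colon ideals of elements
  outside N; q is prime, hence an associated prime of M/N, so A is not partition regular over R/q.
  A submodule S properly containing N is constructed with S/N embedded in R/q and
  Ass(M/S) contained in Ass(M/N). Pairing a bad colouring of R/q with a bad colouring of M/S gives
  a bad colouring of M/N; hence A is partition regular over M/S, contradicting maximality of N.
*)

theory Submission
  imports Defs
begin

section \<open>Submodules and colon ideals\<close>

lemma (in cring) ideal_closedI:
  assumes "I \<subseteq> carrier R" "\<zero> \<in> I"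
    and "\<And>a b. a \<in> I \<Longrightarrow> b \<in> I \<Longrightarrow> a \<oplus> b \<in> I"
    and "\<And>a r. a \<in> I \<Longrightarrow> r \<in> carrier R \<Longrightarrow> r \<otimes> a \<in> I"
  shows "ideal I R"
proof (rule idealI[OF ring_axioms])
  show "subgroup I (add_monoid R)"
  proof (rule add.subgroupI)
    fix a assume a: "a \<in> I"
    have "\<ominus> a = (\<ominus> \<one>) \<otimes> a" using a assms(1) by (auto simp: l_minus)
    thus "\<ominus> a \<in> I" using a assms(4) by simp
  qed (use assms in auto)
qed (use assms in \<open>auto simp: m_comm subset_iff\<close>)

lemma (in module) submodule_closedI:
  assumes "H \<subseteq> carrier M" "\<zero>\<^bsub>M\<^esub> \<in> H"
    and "\<And>x y. x \<in> H \<Longrightarrow> y \<in> H \<Longrightarrow> x \<oplus>\<^bsub>M\<^esub> y \<in> H"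
    and "\<And>a x. a \<in> carrier R \<Longrightarrow> x \<in> H \<Longrightarrow> a \<odot>\<^bsub>M\<^esub> x \<in> H"
  shows "submodule H R M"
proof (rule submoduleI)
  fix x assume x: "x \<in> H"
  hence "(\<ominus> \<one>) \<odot>\<^bsub>M\<^esub> x \<in> H" using assms(4) by simp
  thus "\<ominus>\<^bsub>M\<^esub> x \<in> H" using x assms(1) by (auto simp: smult_l_minus)
qed (use assms in auto)

lemma (in submodule) zero_closed [simp]: "\<zero>\<^bsub>M\<^esub> \<in> H"
  using one_closed by simp

lemma (in module) submodule_minus_closed:
  assumes "submodule H R M" "x \<in> H" "y \<in> H"
  shows "x \<ominus>\<^bsub>M\<^esub> y \<in> H"
  unfolding a_minus_def using assms submoduleE(3,5) by blast

lemma (in abelian_group) minus_add_cancel: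
  "x \<in> carrier G \<Longrightarrow> y \<in> carrier G \<Longrightarrow> (x \<ominus> y) \<oplus> y = x"
  by (simp add: minus_eq a_assoc l_neg)

lemma (in abelian_group) minus_eq_minus_of_add_eq:
  assumes "a \<in> carrier G" "b \<in> carrier G" "a' \<in> carrier G" "b' \<in> carrier G"
    and "a \<oplus> b = a' \<oplus> b'"
  shows "b \<ominus> b' = a' \<ominus> a"
  by (metis (lifting) a_assoc a_comm r_neg2 add.l_inv_ex assms minus_closed minus_eq minus_equality)

lemma (in abelian_group) minus_eq_zeroD:
  "x \<in> carrier G \<Longrightarrow> y \<in> carrier G \<Longrightarrow> x \<ominus> y = \<zero> \<Longrightarrow> x = y"
  by (metis minus_add_cancel l_zero)

lemma (in module) smult_minus_distr:
  "a \<in> carrier R \<Longrightarrow> b \<in> carrier R \<Longrightarrow> x \<in> carrier M \<Longrightarrow> (a \<ominus> b) \<odot>\<^bsub>M\<^esub> x = a \<odot>\<^bsub>M\<^esub> x \<ominus>\<^bsub>M\<^esub> b \<odot>\<^bsub>M\<^esub> x"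
  unfolding R.minus_eq M.minus_eq by (simp add: smult_l_distr smult_l_minus)

lemma (in module) zero_submodule: "submodule {\<zero>\<^bsub>M\<^esub>} R M"
  by (rule submodule_closedI) auto

lemma (in module) submodule_Int:
  assumes "submodule A R M" "submodule B R M"
  shows "submodule (A \<inter> B) R M"
  using submoduleE[OF assms(1)] submoduleE[OF assms(2)] submodule.zero_closed[OF assms(1)]
    submodule.zero_closed[OF assms(2)]
  by (intro submodule_closedI) auto

lemma (in module) submodule_finsum_closed:
  assumes S: "submodule S R M" and "finite J" "f \<in> J \<rightarrow> S"
  shows "finsum M f J \<in> S"
  using assms(2,3)
proof (induction J rule: finite_induct)
  case (insert j J)
  have "f \<in> insert j J \<rightarrow> carrier M" using insert.prems submoduleE(1)[OF S] by auto
  hence "finsum M f (insert j J) = f j \<oplus>\<^bsub>M\<^esub> finsum M f J"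
    using insert.hyps by (simp add: finsum_insert)
  thus ?case using insert submoduleE(5)[OF S] by auto
qed (simp add: submodule.zero_closed[OF S])

lemma (in module) submodule_coset_mem_iff:
  assumes S: "submodule S R M" and "x \<in> carrier M" "y \<in> carrier M" "x \<ominus>\<^bsub>M\<^esub> y \<in> S"
  shows "x \<in> S \<longleftrightarrow> y \<in> S"
proof
  assume "x \<in> S"
  hence "x \<ominus>\<^bsub>M\<^esub> (x \<ominus>\<^bsub>M\<^esub> y) \<in> S" using submodule_minus_closed[OF S] assms(4) by blast
  thus "y \<in> S" using assms(2,3) by (simp add: a_minus_def M.minus_add M.r_neg2)
next
  assume "y \<in> S"
  hence "(x \<ominus>\<^bsub>M\<^esub> y) \<oplus>\<^bsub>M\<^esub> y \<in> S" using submoduleE(5)[OF S] assms(4) by blast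
  thus "x \<in> S" using assms(2,3) by (simp add: M.minus_add_cancel)
qed

definition colon_ideal :: "('a, 'c) ring_scheme \<Rightarrow> ('a, 'b, 'd) module_scheme \<Rightarrow> 'b set \<Rightarrow> 'b \<Rightarrow> 'a set"
  where "colon_ideal R M N x = {a \<in> carrier R. a \<odot>\<^bsub>M\<^esub> x \<in> N}"

lemma (in module) colon_ideal_is_ideal:
  assumes "submodule N R M" "x \<in> carrier M"
  shows "ideal (colon_ideal R M N x) R"
  using assms(2) submoduleE(4,5)[OF assms(1)] submodule.zero_closed[OF assms(1)]
  by (intro ideal_closedI) (auto simp: colon_ideal_def smult_l_distr smult_assoc1)

lemma annihilator_eq_colon_ideal: "annihilator R M x = colon_ideal R M {\<zero>\<^bsub>M\<^esub>} x"
  by (auto simp: annihilator_def colon_ideal_def)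

section \<open>Noetherian modules\<close>

lemma subset_chain_image:
  assumes "subset.chain A C" "\<And>T. T \<in> C \<Longrightarrow> f T \<in> B" "\<And>T T'. T \<subseteq> T' \<Longrightarrow> f T \<subseteq> f T'"
  shows "subset.chain B (f ` C)"
  unfolding subset_chain_def
proof (intro conjI ballI)
  show "f ` C \<subseteq> B" using assms(2) by blast
  fix X Y assume "X \<in> f ` C" "Y \<in> f ` C"
  then obtain T T' where "T \<in> C" "T' \<in> C" "X = f T" "Y = f T'" by blast
  thus "X \<subseteq> Y \<or> Y \<subseteq> X" using assms(1,3) unfolding subset_chain_def by metis
qed

definition module_line_extension ::
    "('a, 'c) ring_scheme \<Rightarrow> ('a, 'b, 'd) module_scheme \<Rightarrow> 'b \<Rightarrow> 'b set \<Rightarrow> 'b set"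
  where "module_line_extension R M g L = {a \<odot>\<^bsub>M\<^esub> g \<oplus>\<^bsub>M\<^esub> y | a y. a \<in> carrier R \<and> y \<in> L}"

definition leading_ideal ::
    "('a, 'c) ring_scheme \<Rightarrow> ('a, 'b, 'd) module_scheme \<Rightarrow> 'b \<Rightarrow> 'b set \<Rightarrow> 'b set \<Rightarrow> 'a set"
  where "leading_ideal R M g L T = {a \<in> carrier R. \<exists>y\<in>L. a \<odot>\<^bsub>M\<^esub> g \<oplus>\<^bsub>M\<^esub> y \<in> T}"

definition noetherian_submodule :: "('a, 'c) ring_scheme \<Rightarrow> ('a, 'b, 'd) module_scheme \<Rightarrow> 'b set \<Rightarrow> bool"
  where "noetherian_submodule R M L \<longleftrightarrow>
    (\<forall>C. C \<noteq> {} \<longrightarrow> subset.chain {T. submodule T R M \<and> T \<subseteq> L} C \<longrightarrow> \<Union>C \<in> C)"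

lemma noetherian_submoduleD:
  "noetherian_submodule R M L \<Longrightarrow> C \<noteq> {} \<Longrightarrow> subset.chain {T. submodule T R M \<and> T \<subseteq> L} C
    \<Longrightarrow> \<Union>C \<in> C"
  unfolding noetherian_submodule_def by blast

primrec prefix_span :: "('a, 'c) ring_scheme \<Rightarrow> ('a, 'b, 'd) module_scheme \<Rightarrow> 'b list \<Rightarrow> nat \<Rightarrow> 'b set"
  where
    "prefix_span R M xs 0 = {\<zero>\<^bsub>M\<^esub>}"
  | "prefix_span R M xs (Suc k) = module_line_extension R M (xs ! k) (prefix_span R M xs k)"

context module
begin

lemma submodule_line_extension:
  assumes L: "submodule L R M" and g: "g \<in> carrier M"
  shows "submodule (module_line_extension R M g L) R M"
proof (rule submodule_closedI)
  show "module_line_extension R M g L \<subseteq> carrier M"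
    using g submoduleE(1)[OF L] unfolding module_line_extension_def by blast
  have "\<zero>\<^bsub>M\<^esub> = \<zero> \<odot>\<^bsub>M\<^esub> g \<oplus>\<^bsub>M\<^esub> \<zero>\<^bsub>M\<^esub>" using g by simp
  thus "\<zero>\<^bsub>M\<^esub> \<in> module_line_extension R M g L"
    using submodule.zero_closed[OF L] unfolding module_line_extension_def by blast
next
  fix x y assume "x \<in> module_line_extension R M g L" "y \<in> module_line_extension R M g L"
  then obtain a b u v where ab: "a \<in> carrier R" "b \<in> carrier R" and uv: "u \<in> L" "v \<in> L"
    and xy: "x = a \<odot>\<^bsub>M\<^esub> g \<oplus>\<^bsub>M\<^esub> u" "y = b \<odot>\<^bsub>M\<^esub> g \<oplus>\<^bsub>M\<^esub> v"
    unfolding module_line_extension_def by blast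
  have "u \<in> carrier M" "v \<in> carrier M" using uv submoduleE(1)[OF L] by auto
  hence "x \<oplus>\<^bsub>M\<^esub> y = (a \<oplus> b) \<odot>\<^bsub>M\<^esub> g \<oplus>\<^bsub>M\<^esub> (u \<oplus>\<^bsub>M\<^esub> v)"
    using ab g by (simp add: xy smult_l_distr M.a_ac)
  thus "x \<oplus>\<^bsub>M\<^esub> y \<in> module_line_extension R M g L"
    using ab uv submoduleE(5)[OF L] unfolding module_line_extension_def by blast
next
  fix c x assume c: "c \<in> carrier R" and "x \<in> module_line_extension R M g L"
  then obtain a u where a: "a \<in> carrier R" and u: "u \<in> L" and x: "x = a \<odot>\<^bsub>M\<^esub> g \<oplus>\<^bsub>M\<^esub> u"
    unfolding module_line_extension_def by blast
  have "u \<in> carrier M" using u submoduleE(1)[OF L] by auto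
  hence "c \<odot>\<^bsub>M\<^esub> x = (c \<otimes> a) \<odot>\<^bsub>M\<^esub> g \<oplus>\<^bsub>M\<^esub> c \<odot>\<^bsub>M\<^esub> u"
    using a c g by (simp add: x smult_r_distr smult_assoc1)
  thus "c \<odot>\<^bsub>M\<^esub> x \<in> module_line_extension R M g L"
    using a c u submoduleE(4)[OF L] unfolding module_line_extension_def by blast
qed

lemma leading_ideal_is_ideal:
  assumes L: "submodule L R M" and T: "submodule T R M" and g: "g \<in> carrier M"
  shows "ideal (leading_ideal R M g L T) R"
proof (rule ideal_closedI)
  show "\<zero> \<in> leading_ideal R M g L T"
    unfolding leading_ideal_def using g submodule.zero_closed[OF L] submodule.zero_closed[OF T]
    by (auto intro!: bexI[of _ "\<zero>\<^bsub>M\<^esub>"])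
next
  fix a b assume "a \<in> leading_ideal R M g L T" "b \<in> leading_ideal R M g L T"
  then obtain u v where ab: "a \<in> carrier R" "b \<in> carrier R" and uv: "u \<in> L" "v \<in> L"
    and in_T: "a \<odot>\<^bsub>M\<^esub> g \<oplus>\<^bsub>M\<^esub> u \<in> T" "b \<odot>\<^bsub>M\<^esub> g \<oplus>\<^bsub>M\<^esub> v \<in> T"
    unfolding leading_ideal_def by blast
  have "u \<in> carrier M" "v \<in> carrier M" using uv submoduleE(1)[OF L] by auto
  hence "(a \<oplus> b) \<odot>\<^bsub>M\<^esub> g \<oplus>\<^bsub>M\<^esub> (u \<oplus>\<^bsub>M\<^esub> v) = (a \<odot>\<^bsub>M\<^esub> g \<oplus>\<^bsub>M\<^esub> u) \<oplus>\<^bsub>M\<^esub> (b \<odot>\<^bsub>M\<^esub> g \<oplus>\<^bsub>M\<^esub> v)"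
    using ab g by (simp add: smult_l_distr M.a_ac)
  thus "a \<oplus> b \<in> leading_ideal R M g L T"
    unfolding leading_ideal_def using ab uv in_T submoduleE(5)[OF L] submoduleE(5)[OF T] by force
next
  fix a c assume "a \<in> leading_ideal R M g L T" and c: "c \<in> carrier R"
  then obtain u where a: "a \<in> carrier R" and u: "u \<in> L" and in_T: "a \<odot>\<^bsub>M\<^esub> g \<oplus>\<^bsub>M\<^esub> u \<in> T"
    unfolding leading_ideal_def by blast
  have "u \<in> carrier M" using u submoduleE(1)[OF L] by auto
  hence "(c \<otimes> a) \<odot>\<^bsub>M\<^esub> g \<oplus>\<^bsub>M\<^esub> c \<odot>\<^bsub>M\<^esub> u = c \<odot>\<^bsub>M\<^esub> (a \<odot>\<^bsub>M\<^esub> g \<oplus>\<^bsub>M\<^esub> u)"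
    using a c g by (simp add: smult_r_distr smult_assoc1)
  thus "c \<otimes> a \<in> leading_ideal R M g L T"
    unfolding leading_ideal_def using a c u in_T submoduleE(4)[OF L] submoduleE(4)[OF T] by force
qed (auto simp: leading_ideal_def)

lemma leading_ideal_mono: "T \<subseteq> T' \<Longrightarrow> leading_ideal R M g L T \<subseteq> leading_ideal R M g L T'"
  unfolding leading_ideal_def by blast

lemma submodule_subset_by_leading_ideal:
  assumes L: "submodule L R M" and T: "submodule T R M" and T': "submodule T' R M"
    and g: "g \<in> carrier M" and "T \<subseteq> T'" and T'_sub: "T' \<subseteq> module_line_extension R M g L"
    and lead: "leading_ideal R M g L T' \<subseteq> leading_ideal R M g L T"
    and trace: "T' \<inter> L \<subseteq> T"
  shows "T' \<subseteq> T"
proof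
  fix z assume z: "z \<in> T'"
  then obtain a y where a: "a \<in> carrier R" and y: "y \<in> L" and z_eq: "z = a \<odot>\<^bsub>M\<^esub> g \<oplus>\<^bsub>M\<^esub> y"
    using T'_sub unfolding module_line_extension_def by blast
  have "a \<in> leading_ideal R M g L T"
    using lead a y z z_eq unfolding leading_ideal_def by blast
  then obtain y' where y': "y' \<in> L" and w: "a \<odot>\<^bsub>M\<^esub> g \<oplus>\<^bsub>M\<^esub> y' \<in> T"
    unfolding leading_ideal_def by blast
  have carrier: "y \<in> carrier M" "y' \<in> carrier M"
    using y y' submoduleE(1)[OF L] by auto
  have "z \<ominus>\<^bsub>M\<^esub> (a \<odot>\<^bsub>M\<^esub> g \<oplus>\<^bsub>M\<^esub> y') = y \<ominus>\<^bsub>M\<^esub> y'"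
    using a g carrier by (simp add: z_eq a_minus_def M.minus_add M.a_ac M.r_neg M.r_neg2)
  moreover have "z \<ominus>\<^bsub>M\<^esub> (a \<odot>\<^bsub>M\<^esub> g \<oplus>\<^bsub>M\<^esub> y') \<in> T'"
    using submodule_minus_closed[OF T' z] w \<open>T \<subseteq> T'\<close> by blast
  ultimately have "z \<ominus>\<^bsub>M\<^esub> (a \<odot>\<^bsub>M\<^esub> g \<oplus>\<^bsub>M\<^esub> y') \<in> T"
    using trace submodule_minus_closed[OF L y y'] by auto
  hence "(z \<ominus>\<^bsub>M\<^esub> (a \<odot>\<^bsub>M\<^esub> g \<oplus>\<^bsub>M\<^esub> y')) \<oplus>\<^bsub>M\<^esub> (a \<odot>\<^bsub>M\<^esub> g \<oplus>\<^bsub>M\<^esub> y') \<in> T"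
    using w submoduleE(5)[OF T] by blast
  moreover have "z \<in> carrier M" using z submoduleE(1)[OF T'] by auto
  ultimately show "z \<in> T"
    using a g carrier by (simp add: M.minus_add_cancel)
qed

lemma noetherian_submodule_mono:
  assumes "noetherian_submodule R M L" "L' \<subseteq> L"
  shows "noetherian_submodule R M L'"
  unfolding noetherian_submodule_def
proof (intro allI impI)
  fix C assume "C \<noteq> {}" "subset.chain {T. submodule T R M \<and> T \<subseteq> L'} C"
  moreover from this(2) have "subset.chain {T. submodule T R M \<and> T \<subseteq> L} C"
    using assms(2) unfolding subset_chain_def by auto
  ultimately show "\<Union>C \<in> C"
    using noetherian_submoduleD[OF assms(1)] by blast
qed

lemma noetherian_submodule_zero: "noetherian_submodule R M {\<zero>\<^bsub>M\<^esub>}"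
  unfolding noetherian_submodule_def
proof (intro allI impI)
  fix C assume "C \<noteq> {}" and chain: "subset.chain {T. submodule T R M \<and> T \<subseteq> {\<zero>\<^bsub>M\<^esub>}} C"
  have "T = {\<zero>\<^bsub>M\<^esub>}" if "T \<in> C" for T
  proof -
    have "submodule T R M" "T \<subseteq> {\<zero>\<^bsub>M\<^esub>}"
      using that chain unfolding subset_chain_def by auto
    thus ?thesis using submodule.zero_closed by blast
  qed
  hence "C = {{\<zero>\<^bsub>M\<^esub>}}" using \<open>C \<noteq> {}\<close> by blast
  thus "\<Union>C \<in> C" by simp
qed

lemma noetherian_submodule_line_extension:
  assumes "noetherian_ring R" and L: "submodule L R M" and g: "g \<in> carrier M"
    and noeth: "noetherian_submodule R M L"
  shows "noetherian_submodule R M (module_line_extension R M g L)"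
  unfolding noetherian_submodule_def
proof (intro allI impI)
  let ?ext = "module_line_extension R M g L" and ?lead = "leading_ideal R M g L"
  fix C assume "C \<noteq> {}" and chain: "subset.chain {T. submodule T R M \<and> T \<subseteq> ?ext} C"
  have sub: "submodule T R M" "T \<subseteq> ?ext" if "T \<in> C" for T
    using chain that unfolding subset_chain_def by auto
  have comparable: "T \<subseteq> T' \<or> T' \<subseteq> T" if "T \<in> C" "T' \<in> C" for T T'
    using chain that unfolding subset_chain_def by blast
  have "subset.chain {I. ideal I R} (?lead ` C)"
    using leading_ideal_is_ideal[OF L sub(1) g] leading_ideal_mono
    by (intro subset_chain_image[OF chain]) auto
  with \<open>C \<noteq> {}\<close> have "\<Union>(?lead ` C) \<in> ?lead ` C"
    by (intro noetherian_ring.ideal_chain_is_trivial[OF assms(1)]) auto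
  then obtain T1 where T1: "T1 \<in> C" "\<Union>(?lead ` C) = ?lead T1" by blast
  have traces: "subset.chain {T. submodule T R M \<and> T \<subseteq> L} ((\<lambda>T. T \<inter> L) ` C)"
    using submodule_Int[OF sub(1) L] by (intro subset_chain_image[OF chain]) auto
  have "(\<lambda>T. T \<inter> L) ` C \<noteq> {}" using \<open>C \<noteq> {}\<close> by simp
  from noetherian_submoduleD[OF noeth this traces]
  obtain T2 where T2: "T2 \<in> C" "\<Union>((\<lambda>T. T \<inter> L) ` C) = T2 \<inter> L" by blast
  define T0 where "T0 = (if T1 \<subseteq> T2 then T2 else T1)"
  have T0: "T0 \<in> C" "T1 \<subseteq> T0" "T2 \<subseteq> T0"
    unfolding T0_def using T1(1) T2(1) comparable[OF T1(1) T2(1)] by auto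
  have "T \<subseteq> T0" if T: "T \<in> C" for T
  proof (cases "T0 \<subseteq> T")
    case True
    have "?lead T \<subseteq> ?lead T0" using T T1 leading_ideal_mono[OF T0(2)] by blast
    moreover have "T \<inter> L \<subseteq> T0" using T T2 T0(3) by blast
    ultimately show ?thesis
      using submodule_subset_by_leading_ideal[OF L sub(1)[OF T0(1)] sub(1)[OF T] g True sub(2)[OF T]] by blast
  qed (use comparable[OF T T0(1)] in blast)
  hence "\<Union>C = T0" using T0(1) by (meson Union_least Union_upper subset_antisym)
  thus "\<Union>C \<in> C" using T0(1) by simp
qed

lemma prefix_span_submodule:
  assumes "set xs \<subseteq> carrier M" "k \<le> length xs"
  shows "submodule (prefix_span R M xs k) R M"
  using assms(2)
proof (induction k)
  case (Suc k)
  have "xs ! k \<in> carrier M" using assms(1) Suc.prems by auto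
  with Suc show ?case by (simp add: submodule_line_extension)
qed (simp add: zero_submodule)

lemma finsum_in_prefix_span:
  assumes "set xs \<subseteq> carrier M" "k \<le> length xs" "\<And>i. i < k \<Longrightarrow> c i \<in> carrier R"
  shows "(\<Oplus>\<^bsub>M\<^esub>i\<in>{..<k}. c i \<odot>\<^bsub>M\<^esub> xs ! i) \<in> prefix_span R M xs k"
  using assms(2,3)
proof (induction k)
  case (Suc k)
  have xs: "\<And>i. i < Suc k \<Longrightarrow> xs ! i \<in> carrier M" using assms(1) Suc.prems(1) by auto
  have "(\<Oplus>\<^bsub>M\<^esub>i\<in>{..<Suc k}. c i \<odot>\<^bsub>M\<^esub> xs ! i)
      = c k \<odot>\<^bsub>M\<^esub> xs ! k \<oplus>\<^bsub>M\<^esub> (\<Oplus>\<^bsub>M\<^esub>i\<in>{..<k}. c i \<odot>\<^bsub>M\<^esub> xs ! i)"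
    unfolding lessThan_Suc using Suc.prems(2) xs by (subst finsum_insert) (auto simp: Pi_def)
  moreover have "(\<Oplus>\<^bsub>M\<^esub>i\<in>{..<k}. c i \<odot>\<^bsub>M\<^esub> xs ! i) \<in> prefix_span R M xs k"
    using Suc by simp
  ultimately show ?case
    using Suc.prems(2) unfolding prefix_span.simps module_line_extension_def by blast
qed simp

lemma noetherian_prefix_span:
  assumes "noetherian_ring R" "set xs \<subseteq> carrier M" "k \<le> length xs"
  shows "noetherian_submodule R M (prefix_span R M xs k)"
  using assms(3)
proof (induction k)
  case (Suc k)
  have "xs ! k \<in> carrier M" using assms(2) Suc.prems by auto
  with Suc show ?case
    using noetherian_submodule_line_extension[OF assms(1) prefix_span_submodule[OF assms(2)]]
    by simp
qed (simp add: noetherian_submodule_zero)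

end

lemma (in noetherian_ring) exists_maximal_ideal:
  assumes "F \<noteq> {}" "\<And>I. I \<in> F \<Longrightarrow> ideal I R"
  shows "\<exists>I\<in>F. \<forall>J\<in>F. I \<subseteq> J \<longrightarrow> J = I"
proof (rule subset_Zorn_nonempty[OF assms(1)])
  fix C assume "C \<noteq> {}" and chain: "subset.chain F C"
  have "C \<subseteq> F" using chain unfolding subset_chain_def by simp
  hence "subset.chain {I. ideal I R} C"
    using chain assms(2) unfolding subset_chain_def by auto
  from ideal_chain_is_trivial[OF \<open>C \<noteq> {}\<close> this]
  show "\<Union>C \<in> F" using \<open>C \<subseteq> F\<close> by auto
qed

locale noetherian_fg_module = module R M + noetherian_ring R
  for R :: "('a, 'c) ring_scheme" (structure) and M :: "('a, 'b) module" (structure) +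
  assumes finitely_generated: "finitely_generated_module R M"
begin

lemma is_noetherian_fg_module: "noetherian_fg_module R M"
  by unfold_locales

lemma is_module: "module R M"
  by unfold_locales

lemma noetherian_submodule_carrier: "noetherian_submodule R M (carrier M)"
proof -
  obtain xs where xs: "set xs \<subseteq> carrier M"
    and span: "\<forall>x\<in>carrier M. \<exists>c. (\<forall>i<length xs. c i \<in> carrier R) \<and>
            x = (\<Oplus>\<^bsub>M\<^esub>i\<in>{..<length xs}. c i \<odot>\<^bsub>M\<^esub> xs ! i)"
    using finitely_generated unfolding finitely_generated_module_def by (elim exE conjE)
  have "carrier M \<subseteq> prefix_span R M xs (length xs)"
  proof
    fix x assume "x \<in> carrier M"
    then obtain c where "\<forall>i<length xs. c i \<in> carrier R"
      "x = (\<Oplus>\<^bsub>M\<^esub>i\<in>{..<length xs}. c i \<odot>\<^bsub>M\<^esub> xs ! i)"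
      using span by blast
    thus "x \<in> prefix_span R M xs (length xs)"
      using finsum_in_prefix_span[OF xs order.refl] by simp
  qed
  thus ?thesis
    using noetherian_prefix_span[OF noetherian_ring_axioms xs order.refl] noetherian_submodule_mono
    by blast
qed

lemma exists_maximal_submodule:
  assumes "F \<noteq> {}" "\<And>T. T \<in> F \<Longrightarrow> submodule T R M"
  shows "\<exists>T\<in>F. \<forall>T'\<in>F. T \<subseteq> T' \<longrightarrow> T' = T"
proof (rule subset_Zorn_nonempty[OF assms(1)])
  fix C assume "C \<noteq> {}" and chain: "subset.chain F C"
  have "C \<subseteq> F" using chain unfolding subset_chain_def by simp
  have "subset.chain {T. submodule T R M \<and> T \<subseteq> carrier M} C"
    unfolding subset_chain_def
  proof
    show "C \<subseteq> {T. submodule T R M \<and> T \<subseteq> carrier M}"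
      using \<open>C \<subseteq> F\<close> assms(2) submoduleE(1) by auto
    show "\<forall>T\<in>C. \<forall>T'\<in>C. T \<subseteq> T' \<or> T' \<subseteq> T" using chain unfolding subset_chain_def by simp
  qed
  from noetherian_submoduleD[OF noetherian_submodule_carrier \<open>C \<noteq> {}\<close> this]
  show "\<Union>C \<in> F" using \<open>C \<subseteq> F\<close> by auto
qed

end

section \<open>The quotient module R/I\<close>

lemma quot_module_carrier [simp]: "carrier (quot_module R I) = carrier (R Quot I)"
  by (simp add: quot_module_def)

lemma FactRing_zero: "\<zero>\<^bsub>R Quot I\<^esub> = I"
  by (simp add: FactRing_def)

lemma quot_module_zero [simp]: "\<zero>\<^bsub>quot_module R I\<^esub> = I"
  by (simp add: quot_module_def FactRing_def)

lemma quot_module_add [simp]: "C \<oplus>\<^bsub>quot_module R I\<^esub> D = C \<oplus>\<^bsub>R Quot I\<^esub> D"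
  by (simp add: quot_module_def)

lemma quot_module_smult [simp]: "a \<odot>\<^bsub>quot_module R I\<^esub> C = (I +>\<^bsub>R\<^esub> a) \<otimes>\<^bsub>R Quot I\<^esub> C"
  by (simp add: quot_module_def)

lemma FactRing_carrier_iff: "C \<in> carrier (R Quot I) \<longleftrightarrow> (\<exists>c\<in>carrier R. C = I +>\<^bsub>R\<^esub> c)"
  by (auto simp: FactRing_def A_RCOSETS_def RCOSETS_def a_r_coset_def)

context cring
begin

lemma a_rcos_eq_ideal_iff:
  assumes "ideal I R" "c \<in> carrier R"
  shows "I +> c = I \<longleftrightarrow> c \<in> I"
proof -
  have "I +> \<zero> = I"
    using a_rcos_zero[OF assms(1) additive_subgroup.zero_closed[OF ideal.axioms(1)[OF assms(1)]]] .
  thus ?thesis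
    using quotient_eq_iff_same_a_r_cos[OF assms(1) assms(2) zero_closed] assms(2)
    by (simp add: a_minus_def)
qed

lemma quot_module_is_module:
  assumes "ideal I R"
  shows "module R (quot_module R I)"
proof -
  interpret Q: cring "R Quot I" using ideal.quotient_is_cring[OF assms is_cring] .
  interpret h: ring_hom_cring R "R Quot I" "(+>) I" using ideal.rcos_ring_hom_cring[OF assms is_cring] .
  show ?thesis
  proof (rule moduleI)
    show "abelian_group (quot_module R I)"
    proof (rule abelian_groupI)
      fix x assume "x \<in> carrier (quot_module R I)"
      thus "\<zero>\<^bsub>quot_module R I\<^esub> \<oplus>\<^bsub>quot_module R I\<^esub> x = x"
        using Q.l_zero[unfolded FactRing_zero] by simp
      show "\<exists>y\<in>carrier (quot_module R I). y \<oplus>\<^bsub>quot_module R I\<^esub> x = \<zero>\<^bsub>quot_module R I\<^esub>"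
        using Q.l_neg[unfolded FactRing_zero] \<open>x \<in> carrier (quot_module R I)\<close>
        by (auto intro!: bexI[of _ "\<ominus>\<^bsub>R Quot I\<^esub> x"])
    next
      show "\<zero>\<^bsub>quot_module R I\<^esub> \<in> carrier (quot_module R I)"
        using Q.zero_closed[unfolded FactRing_zero] by simp
    qed (simp_all add: Q.a_ac)
  qed (simp_all add: is_cring h.hom_closed h.hom_add h.hom_mult Q.l_distr Q.r_distr Q.m_assoc)
qed

end

section \<open>Partition regularity along linear maps\<close>

definition linear_on ::
    "('a, 'c) ring_scheme \<Rightarrow> ('a, 'b, 'd) module_scheme \<Rightarrow> ('a, 'e, 'f) module_scheme
      \<Rightarrow> 'b set \<Rightarrow> ('b \<Rightarrow> 'e) \<Rightarrow> bool"
  where "linear_on R M Q S \<phi> \<longleftrightarrow> \<phi> \<in> S \<rightarrow> carrier Q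
    \<and> (\<forall>x\<in>S. \<forall>y\<in>S. \<phi> (x \<oplus>\<^bsub>M\<^esub> y) = \<phi> x \<oplus>\<^bsub>Q\<^esub> \<phi> y)
    \<and> (\<forall>a\<in>carrier R. \<forall>x\<in>S. \<phi> (a \<odot>\<^bsub>M\<^esub> x) = a \<odot>\<^bsub>Q\<^esub> \<phi> x)"

lemma linear_on_closed: "linear_on R M Q S \<phi> \<Longrightarrow> x \<in> S \<Longrightarrow> \<phi> x \<in> carrier Q"
  unfolding linear_on_def by blast

lemma linear_on_add:
  "linear_on R M Q S \<phi> \<Longrightarrow> x \<in> S \<Longrightarrow> y \<in> S \<Longrightarrow> \<phi> (x \<oplus>\<^bsub>M\<^esub> y) = \<phi> x \<oplus>\<^bsub>Q\<^esub> \<phi> y"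
  unfolding linear_on_def by blast

lemma linear_on_smult:
  "linear_on R M Q S \<phi> \<Longrightarrow> a \<in> carrier R \<Longrightarrow> x \<in> S \<Longrightarrow> \<phi> (a \<odot>\<^bsub>M\<^esub> x) = a \<odot>\<^bsub>Q\<^esub> \<phi> x"
  unfolding linear_on_def by blast

context module
begin

lemma linear_on_zero:
  assumes Q: "module R Q" and S: "submodule S R M" and \<phi>: "linear_on R M Q S \<phi>"
  shows "\<phi> \<zero>\<^bsub>M\<^esub> = \<zero>\<^bsub>Q\<^esub>"
proof -
  have zero: "\<zero>\<^bsub>M\<^esub> \<in> S" by (rule submodule.zero_closed[OF S])
  have "\<phi> (\<zero> \<odot>\<^bsub>M\<^esub> \<zero>\<^bsub>M\<^esub>) = \<zero> \<odot>\<^bsub>Q\<^esub> \<phi> \<zero>\<^bsub>M\<^esub>"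
    by (rule linear_on_smult[OF \<phi> R.zero_closed zero])
  thus ?thesis
    using module.smult_l_null[OF Q linear_on_closed[OF \<phi> zero]] by simp
qed

lemma linear_on_finsum:
  assumes Q: "module R Q" and S: "submodule S R M" and \<phi>: "linear_on R M Q S \<phi>"
    and "finite J" "f \<in> J \<rightarrow> S"
  shows "\<phi> (finsum M f J) = (\<Oplus>\<^bsub>Q\<^esub>j\<in>J. \<phi> (f j))"
  using assms(4,5)
proof (induction J rule: finite_induct)
  case empty
  interpret Q: module R Q by fact
  show ?case using linear_on_zero[OF assms(1-3)] by simp
next
  case (insert j J)
  interpret Q: module R Q by fact
  have f: "f \<in> insert j J \<rightarrow> carrier M" using insert.prems submoduleE(1)[OF S] by auto
  have \<phi>f: "(\<lambda>j. \<phi> (f j)) \<in> insert j J \<rightarrow> carrier Q" using insert.prems \<phi> unfolding linear_on_def by auto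
  have "\<phi> (finsum M f (insert j J)) = \<phi> (f j \<oplus>\<^bsub>M\<^esub> finsum M f J)"
    using f insert.hyps by (simp add: finsum_insert)
  also have "\<dots> = \<phi> (f j) \<oplus>\<^bsub>Q\<^esub> \<phi> (finsum M f J)"
    using insert.prems submodule_finsum_closed[OF S insert.hyps(1)] by (auto intro: linear_on_add[OF \<phi>])
  also have "\<dots> = (\<Oplus>\<^bsub>Q\<^esub>j\<in>insert j J. \<phi> (f j))"
    using insert \<phi>f by (simp add: Q.finsum_insert)
  finally show ?case .
qed

lemma linear_on_eq_mod_kernel:
  assumes Q: "module R Q" and S: "submodule S R M" and \<phi>: "linear_on R M Q S \<phi>" and "N \<subseteq> S"
    and kernel: "\<And>y. y \<in> S \<Longrightarrow> \<phi> y = \<zero>\<^bsub>Q\<^esub> \<longleftrightarrow> y \<in> N"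
    and x: "x \<in> carrier M" and y: "y \<in> carrier M" and xy: "x \<ominus>\<^bsub>M\<^esub> y \<in> N"
  shows "(x \<in> S \<longleftrightarrow> y \<in> S) \<and> (y \<in> S \<longrightarrow> \<phi> x = \<phi> y)"
proof (intro conjI impI)
  have xy_S: "x \<ominus>\<^bsub>M\<^esub> y \<in> S" using xy \<open>N \<subseteq> S\<close> by blast
  thus "x \<in> S \<longleftrightarrow> y \<in> S" by (rule submodule_coset_mem_iff[OF S x y])
  assume "y \<in> S"
  have "x = (x \<ominus>\<^bsub>M\<^esub> y) \<oplus>\<^bsub>M\<^esub> y" using x y by (simp add: M.minus_add_cancel)
  hence "\<phi> x = \<phi> (x \<ominus>\<^bsub>M\<^esub> y) \<oplus>\<^bsub>Q\<^esub> \<phi> y"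
    using linear_on_add[OF \<phi> xy_S \<open>y \<in> S\<close>] by simp
  moreover have "\<phi> (x \<ominus>\<^bsub>M\<^esub> y) = \<zero>\<^bsub>Q\<^esub>" using kernel[OF xy_S] xy by simp
  ultimately show "\<phi> x = \<phi> y"
    using module.axioms(2)[OF Q] linear_on_closed[OF \<phi> \<open>y \<in> S\<close>]
    by (simp add: abelian_monoid.l_zero abelian_group.axioms(1))
qed

end

lemma mat_apply_linear:
  fixes M :: "('a, 'b) module" and Q :: "('a, 'e) module"
  assumes M: "module R M" and Q: "module R Q" and S: "submodule S R M" and \<phi>: "linear_on R M Q S \<phi>"
    and A: "\<And>j. j < l \<Longrightarrow> A i j \<in> carrier R" and m: "\<And>j. j < l \<Longrightarrow> m j \<in> S"
  shows "\<phi> (mat_apply M A l m i) = mat_apply Q A l (\<lambda>j. \<phi> (m j)) i"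
proof -
  interpret module R M by fact
  interpret Q: module R Q by fact
  have "\<phi> (mat_apply M A l m i) = (\<Oplus>\<^bsub>Q\<^esub>j\<in>{..<l}. \<phi> (A i j \<odot>\<^bsub>M\<^esub> m j))"
    unfolding mat_apply_def
    by (rule linear_on_finsum[OF Q S \<phi>]) (use A m submoduleE(4)[OF S] in auto)
  also have "\<dots> = mat_apply Q A l (\<lambda>j. \<phi> (m j)) i"
    unfolding mat_apply_def
    by (rule Q.finsum_cong') (use A m linear_on_smult[OF \<phi>] linear_on_closed[OF \<phi>] in auto)
  finally show ?thesis .
qed

definition monochromatic_solution_mod ::
    "('a, 'b) module \<Rightarrow> (nat \<Rightarrow> nat \<Rightarrow> 'a) \<Rightarrow> nat \<Rightarrow> nat \<Rightarrow> 'b set \<Rightarrow> ('b \<Rightarrow> nat) \<Rightarrow> (nat \<Rightarrow> 'b) \<Rightarrow> bool"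
  where "monochromatic_solution_mod M A k l N \<chi> m \<longleftrightarrow>
    (\<forall>j<l. m j \<in> carrier M) \<and> (\<forall>i<k. mat_apply M A l m i \<in> N)
      \<and> (\<exists>j<l. m j \<notin> N) \<and> (\<exists>c. \<forall>j<l. \<chi> (m j) = c)"

text \<open>Partition regularity over \<open>M/N\<close>: colourings of \<open>M/N\<close> are the colourings of \<open>M\<close> that are
  constant on the cosets of \<open>N\<close>.\<close>

definition partition_regular_mod ::
    "('a, 'b) module \<Rightarrow> (nat \<Rightarrow> nat \<Rightarrow> 'a) \<Rightarrow> nat \<Rightarrow> nat \<Rightarrow> 'b set \<Rightarrow> bool"
  where "partition_regular_mod M A k l N \<longleftrightarrow>
    (\<forall>r\<ge>1. \<forall>\<chi> :: 'b \<Rightarrow> nat. \<chi> ` carrier M \<subseteq> {1..r} \<longrightarrow>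
      (\<forall>x\<in>carrier M. \<forall>y\<in>carrier M. x \<ominus>\<^bsub>M\<^esub> y \<in> N \<longrightarrow> \<chi> x = \<chi> y) \<longrightarrow>
      (\<exists>m. monochromatic_solution_mod M A k l N \<chi> m))"

lemma partition_regular_iff_mod_zero:
  fixes M :: "('a, 'b) module"
  assumes "module R M"
  shows "partition_regular M A k l \<longleftrightarrow> partition_regular_mod M A k l {\<zero>\<^bsub>M\<^esub>}"
proof -
  interpret module R M by fact
  have "\<forall>x\<in>carrier M. \<forall>y\<in>carrier M. x \<ominus>\<^bsub>M\<^esub> y \<in> {\<zero>\<^bsub>M\<^esub>} \<longrightarrow> \<chi> x = \<chi> y" for \<chi> :: "'b \<Rightarrow> nat"
    using M.minus_eq_zeroD by auto
  thus ?thesis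
    unfolding partition_regular_def partition_regular_for_def partition_regular_mod_def
      monochromatic_solution_mod_def
    by simp
qed

lemma not_partition_regular_mod_carrier: "\<not> partition_regular_mod M A k l (carrier M)"
proof
  assume "partition_regular_mod M A k l (carrier M)"
  from this[unfolded partition_regular_mod_def, rule_format, of 1 "\<lambda>_. 1"]
  obtain m where "monochromatic_solution_mod M A k l (carrier M) (\<lambda>_. 1) m" by auto
  thus False unfolding monochromatic_solution_mod_def by blast
qed

lemma monochromatic_solution_mod_image:
  fixes M :: "('a, 'b) module" and Q :: "('a, 'e) module"
  assumes M: "module R M" and Q: "module R Q" and A: "matrix_over R A k l"
    and S: "submodule S R M" and \<phi>: "linear_on R M Q S \<phi>" and "N \<subseteq> S"
    and kernel: "\<And>y. y \<in> S \<Longrightarrow> \<phi> y = \<zero>\<^bsub>Q\<^esub> \<longleftrightarrow> y \<in> N"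
    and m_S: "\<And>j. j < l \<Longrightarrow> m j \<in> S" and sol: "monochromatic_solution_mod M A k l N (\<chi> \<circ> \<phi>) m"
  shows "monochromatic_solution_mod Q A k l {\<zero>\<^bsub>Q\<^esub>} \<chi> (\<phi> \<circ> m)"
proof -
  have "mat_apply Q A l (\<phi> \<circ> m) i = \<zero>\<^bsub>Q\<^esub>" if "i < k" for i
  proof -
    have "mat_apply Q A l (\<phi> \<circ> m) i = \<phi> (mat_apply M A l m i)"
      using A that m_S unfolding comp_def
      by (intro mat_apply_linear[OF M Q S \<phi>, symmetric]) (auto simp: matrix_over_def)
    moreover have "mat_apply M A l m i \<in> N" using sol that unfolding monochromatic_solution_mod_def by blast
    ultimately show ?thesis using kernel[OF subsetD[OF \<open>N \<subseteq> S\<close>]] by simp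
  qed
  moreover have "\<exists>j<l. \<phi> (m j) \<noteq> \<zero>\<^bsub>Q\<^esub>" using sol kernel m_S unfolding monochromatic_solution_mod_def by auto
  ultimately show ?thesis
    using sol m_S linear_on_closed[OF \<phi>] unfolding monochromatic_solution_mod_def by auto
qed

lemma partition_regular_of_embedding:
  fixes Q :: "('a, 'e) module" and M :: "('a, 'b) module"
  assumes Q: "module R Q" and M: "module R M" and A: "matrix_over R A k l"
    and \<phi>: "linear_on R Q M (carrier Q) \<phi>"
    and inj: "\<And>y. y \<in> carrier Q \<Longrightarrow> \<phi> y = \<zero>\<^bsub>M\<^esub> \<Longrightarrow> y = \<zero>\<^bsub>Q\<^esub>"
    and PR: "partition_regular Q A k l"
  shows "partition_regular M A k l"
  unfolding partition_regular_iff_mod_zero[OF M] partition_regular_mod_def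
proof (intro allI impI)
  interpret Q: module R Q by fact
  fix r :: nat and \<chi> :: "'b \<Rightarrow> nat"
  assume r: "r \<ge> 1" and \<chi>: "\<chi> ` carrier M \<subseteq> {1..r}"
  have kernel: "\<phi> y = \<zero>\<^bsub>M\<^esub> \<longleftrightarrow> y \<in> {\<zero>\<^bsub>Q\<^esub>}" if "y \<in> carrier Q" for y
    using inj[OF that] Q.linear_on_zero[OF M Q.carrier_is_submodule \<phi>] by auto
  have range: "(\<chi> \<circ> \<phi>) ` carrier Q \<subseteq> {1..r}" using \<chi> linear_on_closed[OF \<phi>] by auto
  have inv: "\<forall>x\<in>carrier Q. \<forall>y\<in>carrier Q. x \<ominus>\<^bsub>Q\<^esub> y \<in> {\<zero>\<^bsub>Q\<^esub>} \<longrightarrow> (\<chi> \<circ> \<phi>) x = (\<chi> \<circ> \<phi>) y"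
    using Q.minus_eq_zeroD by auto
  from PR[unfolded partition_regular_iff_mod_zero[OF Q] partition_regular_mod_def, rule_format,
      OF r range inv[rule_format]]
  obtain m where m: "monochromatic_solution_mod Q A k l {\<zero>\<^bsub>Q\<^esub>} (\<chi> \<circ> \<phi>) m" by blast
  hence "\<And>j. j < l \<Longrightarrow> m j \<in> carrier Q" unfolding monochromatic_solution_mod_def by blast
  from monochromatic_solution_mod_image[OF Q M A Q.carrier_is_submodule \<phi> _ kernel this m]
  show "\<exists>m. monochromatic_solution_mod M A k l {\<zero>\<^bsub>M\<^esub>} \<chi> m" by blast
qed

lemma (in module) smult_eq_if_same_coset:
  assumes x: "x \<in> carrier M" and P: "ideal P R" "P = colon_ideal R M {\<zero>\<^bsub>M\<^esub>} x"
    and c: "c \<in> carrier R" "c' \<in> carrier R" "P +> c = P +> c'"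
  shows "c \<odot>\<^bsub>M\<^esub> x = c' \<odot>\<^bsub>M\<^esub> x"
proof -
  have "(c \<ominus> c') \<odot>\<^bsub>M\<^esub> x = \<zero>\<^bsub>M\<^esub>"
    using quotient_eq_iff_same_a_r_cos[OF P(1) c(1,2)] c(3) unfolding P(2) colon_ideal_def by simp
  thus ?thesis using smult_minus_distr[OF c(1,2) x] M.minus_eq_zeroD c x by simp
qed

lemma (in module) quot_annihilator_embedding:
  assumes x: "x \<in> carrier M" and P: "ideal P R" "P = colon_ideal R M {\<zero>\<^bsub>M\<^esub>} x"
  obtains \<phi> where "linear_on R (quot_module R P) M (carrier (quot_module R P)) \<phi>"
    and "\<And>C. C \<in> carrier (quot_module R P) \<Longrightarrow> \<phi> C = \<zero>\<^bsub>M\<^esub> \<Longrightarrow> C = \<zero>\<^bsub>quot_module R P\<^esub>"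
proof
  interpret h: ring_hom_cring R "R Quot P" "(+>) P"
    using ideal.rcos_ring_hom_cring[OF P(1) is_cring] .
  define \<phi> where "\<phi> C = (SOME c. c \<in> carrier R \<and> C = P +> c) \<odot>\<^bsub>M\<^esub> x" for C
  have \<phi>_coset: "\<phi> (P +> c) = c \<odot>\<^bsub>M\<^esub> x" if c: "c \<in> carrier R" for c
  proof -
    obtain c' where c': "c' \<in> carrier R" "P +> c = P +> c'" "\<phi> (P +> c) = c' \<odot>\<^bsub>M\<^esub> x"
      using someI_ex[of "\<lambda>c'. c' \<in> carrier R \<and> P +> c = P +> c'"] c unfolding \<phi>_def by blast
    thus ?thesis using smult_eq_if_same_coset[OF x P c c'(1,2)] by simp
  qed
  have coset: "\<exists>c\<in>carrier R. C = P +> c" if "C \<in> carrier (quot_module R P)" for C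
    by (rule FactRing_carrier_iff[THEN iffD1]) (use that in simp)
  show "linear_on R (quot_module R P) M (carrier (quot_module R P)) \<phi>"
    unfolding linear_on_def
  proof (intro conjI ballI Pi_I)
    fix C assume "C \<in> carrier (quot_module R P)"
    with coset obtain c where "c \<in> carrier R" "C = P +> c" by blast
    thus "\<phi> C \<in> carrier M" using \<phi>_coset x by simp
  next
    fix C D assume "C \<in> carrier (quot_module R P)" "D \<in> carrier (quot_module R P)"
    with coset obtain c d where "c \<in> carrier R" "C = P +> c" "d \<in> carrier R" "D = P +> d" by metis
    moreover from calculation have "C \<oplus>\<^bsub>quot_module R P\<^esub> D = P +> (c \<oplus> d)" by simp
    ultimately show "\<phi> (C \<oplus>\<^bsub>quot_module R P\<^esub> D) = \<phi> C \<oplus>\<^bsub>M\<^esub> \<phi> D"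
      using \<phi>_coset x by (simp add: smult_l_distr del: h.hom_add)
  next
    fix a C assume "a \<in> carrier R" "C \<in> carrier (quot_module R P)"
    with coset obtain c where "c \<in> carrier R" "C = P +> c" by blast
    moreover from calculation have "a \<odot>\<^bsub>quot_module R P\<^esub> C = P +> (a \<otimes> c)"
      using \<open>a \<in> carrier R\<close> by simp
    ultimately show "\<phi> (a \<odot>\<^bsub>quot_module R P\<^esub> C) = a \<odot>\<^bsub>M\<^esub> \<phi> C"
      using \<phi>_coset x \<open>a \<in> carrier R\<close> by (simp add: smult_assoc1 del: h.hom_mult)
  qed
  fix C assume "C \<in> carrier (quot_module R P)" "\<phi> C = \<zero>\<^bsub>M\<^esub>"
  with coset obtain c where c: "c \<in> carrier R" "C = P +> c" by blast
  hence "c \<in> P" using \<open>\<phi> C = \<zero>\<^bsub>M\<^esub>\<close> \<phi>_coset unfolding P(2) colon_ideal_def by simp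
  thus "C = \<zero>\<^bsub>quot_module R P\<^esub>" using a_rcos_eq_ideal_iff[OF P(1) c(1)] c(2) by simp
qed

lemma partition_regular_of_associated_prime:
  fixes M :: "('a, 'b) module"
  assumes M: "module R M" and A: "matrix_over R A k l"
    and P: "associated_prime R M P" and PR: "partition_regular (quot_module R P) A k l"
  shows "partition_regular M A k l"
proof -
  interpret module R M by fact
  obtain x where x: "x \<in> carrier M" and P_eq: "P = annihilator R M x" and prime: "primeideal P R"
    using P unfolding associated_prime_def by blast
  have P_ideal: "ideal P R" using prime by (rule primeideal.axioms(1))
  obtain \<phi> where "linear_on R (quot_module R P) M (carrier (quot_module R P)) \<phi>"
    and "\<And>C. C \<in> carrier (quot_module R P) \<Longrightarrow> \<phi> C = \<zero>\<^bsub>M\<^esub> \<Longrightarrow> C = \<zero>\<^bsub>quot_module R P\<^esub>"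
    using quot_annihilator_embedding[OF x P_ideal P_eq[unfolded annihilator_eq_colon_ideal]] by blast
  from partition_regular_of_embedding[OF quot_module_is_module[OF P_ideal] M A this PR]
  show ?thesis .
qed

lemma add_mult_eqD:
  fixes a a' b b' r :: nat
  assumes "a \<in> {1..r}" "a' \<in> {1..r}" "a + r * b = a' + r * b'"
  shows "a = a' \<and> b = b'"
proof -
  have "(a - 1) + r * b = (a' - 1) + r * b'" using assms by auto
  hence "((a - 1) + r * b) div r = ((a' - 1) + r * b') div r"
    "((a - 1) + r * b) mod r = ((a' - 1) + r * b') mod r" by simp_all
  moreover have "a - 1 < r" "a' - 1 < r" using assms by auto
  ultimately show ?thesis using assms(1,2) by auto
qed

lemma add_mult_constD:
  fixes a b :: "nat \<Rightarrow> nat"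
  assumes range: "\<And>j. j < l \<Longrightarrow> a j \<in> {1..r}" and "\<exists>c. \<forall>j<l. a j + r * b j = c"
  shows "(\<exists>c. \<forall>j<l. a j = c) \<and> (\<exists>c. \<forall>j<l. b j = c)"
proof (cases "l = 0")
  case False
  from assms(2) obtain c where c: "\<forall>j<l. a j + r * b j = c" ..
  have "a j = a 0 \<and> b j = b 0" if "j < l" for j
  proof (rule add_mult_eqD)
    show "a j \<in> {1..r}" "a 0 \<in> {1..r}" using range that False by simp_all
    show "a j + r * b j = a 0 + r * b 0" using c that False by simp
  qed
  thus ?thesis by blast
qed simp

text \<open>If \<open>S/N\<close> embeds into \<open>Q\<close> and \<open>A\<close> is not partition regular over \<open>Q\<close>, a colouring of \<open>Q\<close>
  without monochromatic solutions, pulled back to \<open>S/N\<close>, combines with a bad colouring of \<open>M/S\<close>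
  into a bad colouring of \<open>M/N\<close>.\<close>

lemma partition_regular_mod_extend:
  fixes M :: "('a, 'b) module" and Q :: "('a, 'e) module"
  assumes M: "module R M" and Q: "module R Q" and A: "matrix_over R A k l"
    and S: "submodule S R M" and "N \<subseteq> S"
    and \<phi>: "linear_on R M Q S \<phi>" and kernel: "\<And>y. y \<in> S \<Longrightarrow> \<phi> y = \<zero>\<^bsub>Q\<^esub> \<longleftrightarrow> y \<in> N"
    and PR_N: "partition_regular_mod M A k l N" and not_PR_Q: "\<not> partition_regular Q A k l"
  shows "partition_regular_mod M A k l S"
proof (rule ccontr)
  interpret module R M by fact
  assume "\<not> partition_regular_mod M A k l S"
  then obtain r2 and \<chi>2 :: "'b \<Rightarrow> nat" where r2: "r2 \<ge> 1" and \<chi>2: "\<chi>2 ` carrier M \<subseteq> {1..r2}"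
    and \<chi>2_inv: "\<forall>x\<in>carrier M. \<forall>y\<in>carrier M. x \<ominus>\<^bsub>M\<^esub> y \<in> S \<longrightarrow> \<chi>2 x = \<chi>2 y"
    and no_sol_S: "\<And>m. \<not> monochromatic_solution_mod M A k l S \<chi>2 m"
    unfolding partition_regular_mod_def by blast
  from not_PR_Q obtain r1 and \<chi>1 :: "'e \<Rightarrow> nat" where \<chi>1: "\<chi>1 ` carrier Q \<subseteq> {1..r1}"
    and no_sol_Q: "\<And>m. \<not> monochromatic_solution_mod Q A k l {\<zero>\<^bsub>Q\<^esub>} \<chi>1 m"
    unfolding partition_regular_iff_mod_zero[OF Q] partition_regular_mod_def by blast
  define \<chi>1' where "\<chi>1' x = (if x \<in> S then \<chi>1 (\<phi> x) else 0)" for x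
  define \<chi> where "\<chi> x = \<chi>2 x + r2 * \<chi>1' x" for x
  have "\<chi> x \<in> {1..r2 + r2 * r1}" if "x \<in> carrier M" for x
  proof -
    have "\<chi>1' x \<le> r1" using \<chi>1 linear_on_closed[OF \<phi>] unfolding \<chi>1'_def by force
    moreover have "\<chi>2 x \<in> {1..r2}" using \<chi>2 that by blast
    ultimately show ?thesis unfolding \<chi>_def by (simp add: add_le_mono)
  qed
  moreover have "\<chi> x = \<chi> y" if "x \<in> carrier M" "y \<in> carrier M" "x \<ominus>\<^bsub>M\<^esub> y \<in> N" for x y
    using linear_on_eq_mod_kernel[OF Q S \<phi> \<open>N \<subseteq> S\<close> kernel that] \<chi>2_inv that \<open>N \<subseteq> S\<close>
    unfolding \<chi>_def \<chi>1'_def by auto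
  moreover have "1 \<le> r2 + r2 * r1" using r2 by simp
  ultimately obtain m where m: "monochromatic_solution_mod M A k l N \<chi> m"
    using PR_N unfolding partition_regular_mod_def by (metis image_subsetI)
  have m_carrier: "\<And>j. j < l \<Longrightarrow> m j \<in> carrier M"
    using m unfolding monochromatic_solution_mod_def by blast
  have mono: "(\<exists>c. \<forall>j<l. \<chi>2 (m j) = c) \<and> (\<exists>c. \<forall>j<l. \<chi>1' (m j) = c)"
  proof (rule add_mult_constD)
    show "\<chi>2 (m j) \<in> {1..r2}" if "j < l" for j using \<chi>2 m_carrier[OF that] by blast
    show "\<exists>c. \<forall>j<l. \<chi>2 (m j) + r2 * \<chi>1' (m j) = c"
      using m unfolding monochromatic_solution_mod_def \<chi>_def by simp
  qed
  have m_S: "\<And>j. j < l \<Longrightarrow> m j \<in> S"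
    using no_sol_S[of m] m mono \<open>N \<subseteq> S\<close> unfolding monochromatic_solution_mod_def by blast
  have "monochromatic_solution_mod M A k l N (\<chi>1 \<circ> \<phi>) m"
    using m mono m_S unfolding monochromatic_solution_mod_def \<chi>1'_def by auto
  from monochromatic_solution_mod_image[OF M Q A S \<phi> \<open>N \<subseteq> S\<close> kernel m_S this] no_sol_Q
  show False by blast
qed

section \<open>Saturating a submodule\<close>

definition associated_prime_mod ::
    "('a, 'c) ring_scheme \<Rightarrow> ('a, 'b, 'd) module_scheme \<Rightarrow> 'b set \<Rightarrow> 'a set \<Rightarrow> bool"
  where "associated_prime_mod R M N P \<longleftrightarrow> primeideal P R \<and> (\<exists>z\<in>carrier M - N. P = colon_ideal R M N z)"

lemma associated_prime_mod_zero_imp: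
  "associated_prime_mod R M {\<zero>\<^bsub>M\<^esub>} P \<Longrightarrow> associated_prime R M P"
  unfolding associated_prime_mod_def associated_prime_def annihilator_eq_colon_ideal by blast

locale maximal_colon = noetherian_fg_module +
  fixes N and x0
  assumes N: "submodule N R M"
    and x0: "x0 \<in> carrier M" "x0 \<notin> N"
    and x0_maximal: "\<And>z. z \<in> carrier M - N \<Longrightarrow> colon_ideal R M N x0 \<subseteq> colon_ideal R M N z
      \<Longrightarrow> colon_ideal R M N z = colon_ideal R M N x0"
begin

abbreviation q where "q \<equiv> colon_ideal R M N x0"

lemma N_carrier: "y \<in> N \<Longrightarrow> y \<in> carrier M"
  using submoduleE(1)[OF N] by auto

lemma q_ideal: "ideal q R"
  using colon_ideal_is_ideal[OF N x0(1)] .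

lemma q_carrier: "a \<in> q \<Longrightarrow> a \<in> carrier R"
  unfolding colon_ideal_def by simp

lemma q_prime: "primeideal q R"
proof (rule primeidealI[OF q_ideal is_cring])
  have "\<one> \<notin> q" using x0 unfolding colon_ideal_def by simp
  thus "carrier R \<noteq> q" by blast
next
  fix a b assume a: "a \<in> carrier R" and b: "b \<in> carrier R" and ab: "a \<otimes> b \<in> q"
  show "a \<in> q \<or> b \<in> q"
  proof (cases "a \<in> q")
    case False
    hence ax0: "a \<odot>\<^bsub>M\<^esub> x0 \<in> carrier M - N" using a x0 unfolding colon_ideal_def by auto
    have "q \<subseteq> colon_ideal R M N (a \<odot>\<^bsub>M\<^esub> x0)"
    proof
      fix r assume r: "r \<in> q"
      have "r \<odot>\<^bsub>M\<^esub> (a \<odot>\<^bsub>M\<^esub> x0) = a \<odot>\<^bsub>M\<^esub> (r \<odot>\<^bsub>M\<^esub> x0)"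
        using a q_carrier[OF r] x0 by (simp add: smult_assoc1[symmetric] m_comm)
      thus "r \<in> colon_ideal R M N (a \<odot>\<^bsub>M\<^esub> x0)"
        using r a submoduleE(4)[OF N] unfolding colon_ideal_def by auto
    qed
    hence colon_eq: "colon_ideal R M N (a \<odot>\<^bsub>M\<^esub> x0) = q" using x0_maximal[OF ax0] by simp
    have "b \<odot>\<^bsub>M\<^esub> (a \<odot>\<^bsub>M\<^esub> x0) = (a \<otimes> b) \<odot>\<^bsub>M\<^esub> x0"
      using a b x0 by (metis smult_assoc1 m_comm)
    hence "b \<in> colon_ideal R M N (a \<odot>\<^bsub>M\<^esub> x0)" using ab b unfolding colon_ideal_def by simp
    thus ?thesis using colon_eq by simp
  qed simp
qed

lemma associated_prime_mod_q: "associated_prime_mod R M N q"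
  unfolding associated_prime_mod_def using q_prime x0 by blast

definition q_torsion where "q_torsion = {y \<in> carrier M. \<forall>a\<in>q. a \<odot>\<^bsub>M\<^esub> y \<in> N}"

lemma q_torsion_carrier: "y \<in> q_torsion \<Longrightarrow> y \<in> carrier M"
  unfolding q_torsion_def by simp

lemma q_torsionD: "y \<in> q_torsion \<Longrightarrow> a \<in> q \<Longrightarrow> a \<odot>\<^bsub>M\<^esub> y \<in> N"
  unfolding q_torsion_def by simp

lemma colon_ideal_q_torsion:
  assumes "y \<in> q_torsion" "y \<notin> N"
  shows "colon_ideal R M N y = q"
proof (rule x0_maximal)
  show "y \<in> carrier M - N" using assms q_torsion_carrier by simp
  show "q \<subseteq> colon_ideal R M N y"
    using q_torsionD[OF assms(1)] q_carrier unfolding colon_ideal_def by blast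
qed

lemma submodule_q_torsion: "submodule q_torsion R M"
proof (rule submodule_closedI)
  show "\<zero>\<^bsub>M\<^esub> \<in> q_torsion"
    unfolding q_torsion_def using q_carrier submodule.zero_closed[OF N] by auto
next
  fix y y' assume y: "y \<in> q_torsion" and y': "y' \<in> q_torsion"
  have "a \<odot>\<^bsub>M\<^esub> (y \<oplus>\<^bsub>M\<^esub> y') \<in> N" if "a \<in> q" for a
    using y y' that q_carrier[OF that] submoduleE(5)[OF N] unfolding q_torsion_def by (simp add: smult_r_distr)
  thus "y \<oplus>\<^bsub>M\<^esub> y' \<in> q_torsion" using y y' unfolding q_torsion_def by simp
next
  fix b y assume b: "b \<in> carrier R" and y: "y \<in> q_torsion"
  have "a \<odot>\<^bsub>M\<^esub> (b \<odot>\<^bsub>M\<^esub> y) \<in> N" if "a \<in> q" for a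
  proof -
    have "a \<odot>\<^bsub>M\<^esub> (b \<odot>\<^bsub>M\<^esub> y) = b \<odot>\<^bsub>M\<^esub> (a \<odot>\<^bsub>M\<^esub> y)"
      using y b q_carrier[OF that] unfolding q_torsion_def by (simp add: smult_assoc1[symmetric] m_comm)
    thus ?thesis using y that b submoduleE(4)[OF N] unfolding q_torsion_def by simp
  qed
  thus "b \<odot>\<^bsub>M\<^esub> y \<in> q_torsion" using y b unfolding q_torsion_def by simp
qed (auto simp: q_torsion_def)

definition scaled_cong
  where "scaled_cong s y c \<longleftrightarrow> c \<in> carrier R \<and> (\<exists>n\<in>N. s \<odot>\<^bsub>M\<^esub> y = n \<oplus>\<^bsub>M\<^esub> c \<odot>\<^bsub>M\<^esub> x0)"

lemma scaled_cong_carrier: "scaled_cong s y c \<Longrightarrow> c \<in> carrier R"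
  unfolding scaled_cong_def by simp

lemma scaled_cong_add:
  assumes "scaled_cong s y c" "scaled_cong s y' c'" "s \<in> carrier R" "y \<in> carrier M" "y' \<in> carrier M"
  shows "scaled_cong s (y \<oplus>\<^bsub>M\<^esub> y') (c \<oplus> c')"
proof -
  obtain n n' where n: "n \<in> N" "s \<odot>\<^bsub>M\<^esub> y = n \<oplus>\<^bsub>M\<^esub> c \<odot>\<^bsub>M\<^esub> x0"
    and n': "n' \<in> N" "s \<odot>\<^bsub>M\<^esub> y' = n' \<oplus>\<^bsub>M\<^esub> c' \<odot>\<^bsub>M\<^esub> x0"
    and c: "c \<in> carrier R" "c' \<in> carrier R"
    using assms(1,2) unfolding scaled_cong_def by blast
  have "s \<odot>\<^bsub>M\<^esub> (y \<oplus>\<^bsub>M\<^esub> y') = (n \<oplus>\<^bsub>M\<^esub> n') \<oplus>\<^bsub>M\<^esub> (c \<oplus> c') \<odot>\<^bsub>M\<^esub> x0"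
    using assms(3-5) n(2) n'(2) N_carrier[OF n(1)] N_carrier[OF n'(1)] c x0(1)
    by (simp add: smult_r_distr smult_l_distr M.a_ac)
  moreover have "n \<oplus>\<^bsub>M\<^esub> n' \<in> N" using submoduleE(5)[OF N n(1) n'(1)] .
  ultimately show ?thesis unfolding scaled_cong_def using c by blast
qed

lemma scaled_cong_smult:
  assumes "scaled_cong s y c" "a \<in> carrier R" "s \<in> carrier R" "y \<in> carrier M"
  shows "scaled_cong s (a \<odot>\<^bsub>M\<^esub> y) (a \<otimes> c)"
proof -
  obtain n where n: "n \<in> N" "s \<odot>\<^bsub>M\<^esub> y = n \<oplus>\<^bsub>M\<^esub> c \<odot>\<^bsub>M\<^esub> x0" and c: "c \<in> carrier R"
    using assms(1) unfolding scaled_cong_def by blast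
  have "s \<odot>\<^bsub>M\<^esub> (a \<odot>\<^bsub>M\<^esub> y) = a \<odot>\<^bsub>M\<^esub> (s \<odot>\<^bsub>M\<^esub> y)"
    using assms(2-4) by (metis smult_assoc1 m_comm)
  also have "\<dots> = a \<odot>\<^bsub>M\<^esub> n \<oplus>\<^bsub>M\<^esub> (a \<otimes> c) \<odot>\<^bsub>M\<^esub> x0"
    using n(2) assms(2) N_carrier[OF n(1)] c x0(1) by (simp add: smult_r_distr smult_assoc1)
  finally show ?thesis
    unfolding scaled_cong_def using submoduleE(4)[OF N assms(2) n(1)] c assms(2) by blast
qed

lemma scaled_cong_of_mem:
  assumes "y \<in> N" "s \<in> carrier R"
  shows "scaled_cong s y \<zero>"
proof -
  have "s \<odot>\<^bsub>M\<^esub> y = s \<odot>\<^bsub>M\<^esub> y \<oplus>\<^bsub>M\<^esub> \<zero> \<odot>\<^bsub>M\<^esub> x0"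
    using assms N_carrier x0(1) by simp
  thus ?thesis unfolding scaled_cong_def using submoduleE(4)[OF N assms(2,1)] by blast
qed

lemma scaled_cong_unique:
  assumes "scaled_cong s y c" "scaled_cong s y c'"
  shows "c \<ominus> c' \<in> q"
proof -
  obtain n n' where n: "n \<in> N" "s \<odot>\<^bsub>M\<^esub> y = n \<oplus>\<^bsub>M\<^esub> c \<odot>\<^bsub>M\<^esub> x0"
    and n': "n' \<in> N" "s \<odot>\<^bsub>M\<^esub> y = n' \<oplus>\<^bsub>M\<^esub> c' \<odot>\<^bsub>M\<^esub> x0"
    and c: "c \<in> carrier R" "c' \<in> carrier R"
    using assms unfolding scaled_cong_def by blast
  have "c \<odot>\<^bsub>M\<^esub> x0 \<ominus>\<^bsub>M\<^esub> c' \<odot>\<^bsub>M\<^esub> x0 = n' \<ominus>\<^bsub>M\<^esub> n"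
    using n n' c x0(1) N_carrier by (intro M.minus_eq_minus_of_add_eq) auto
  moreover have "(c \<ominus> c') \<odot>\<^bsub>M\<^esub> x0 = c \<odot>\<^bsub>M\<^esub> x0 \<ominus>\<^bsub>M\<^esub> c' \<odot>\<^bsub>M\<^esub> x0"
    using c x0(1) by (rule smult_minus_distr)
  ultimately have "(c \<ominus> c') \<odot>\<^bsub>M\<^esub> x0 \<in> N" using submodule_minus_closed[OF N n'(1) n(1)] by simp
  thus ?thesis unfolding colon_ideal_def using c by simp
qed

lemma scaled_cong_mult:
  assumes "scaled_cong s y c" "s \<in> carrier R" "t \<in> carrier R" "y \<in> carrier M"
  shows "scaled_cong (t \<otimes> s) y (t \<otimes> c)"
proof -
  have "(t \<otimes> s) \<odot>\<^bsub>M\<^esub> y = s \<odot>\<^bsub>M\<^esub> (t \<odot>\<^bsub>M\<^esub> y)" using assms(2-4) by (metis smult_assoc1 m_comm)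
  thus ?thesis using scaled_cong_smult[OF assms(1) assms(3) assms(2,4)] unfolding scaled_cong_def by simp
qed

lemma scaled_cong_smult_left:
  assumes "scaled_cong s (t \<odot>\<^bsub>M\<^esub> y) c" "s \<in> carrier R" "t \<in> carrier R" "y \<in> carrier M"
  shows "scaled_cong (s \<otimes> t) y c"
  using assms unfolding scaled_cong_def by (simp add: smult_assoc1)

definition line_preimage
  where "line_preimage s = {y \<in> q_torsion. \<exists>c. scaled_cong s y c}"

lemma submodule_line_preimage:
  assumes s: "s \<in> carrier R"
  shows "submodule (line_preimage s) R M"
proof (rule submodule_closedI)
  show "line_preimage s \<subseteq> carrier M"
    unfolding line_preimage_def using q_torsion_carrier by blast
  show "\<zero>\<^bsub>M\<^esub> \<in> line_preimage s"
    unfolding line_preimage_def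
    using submodule.zero_closed[OF submodule_q_torsion] scaled_cong_of_mem[OF submodule.zero_closed[OF N] s]
    by blast
next
  fix y y' assume "y \<in> line_preimage s" "y' \<in> line_preimage s"
  then obtain c c' where y: "y \<in> q_torsion" "scaled_cong s y c" and y': "y' \<in> q_torsion" "scaled_cong s y' c'"
    unfolding line_preimage_def by blast
  have "scaled_cong s (y \<oplus>\<^bsub>M\<^esub> y') (c \<oplus> c')"
    using scaled_cong_add[OF y(2) y'(2) s q_torsion_carrier[OF y(1)] q_torsion_carrier[OF y'(1)]] .
  thus "y \<oplus>\<^bsub>M\<^esub> y' \<in> line_preimage s"
    unfolding line_preimage_def using submoduleE(5)[OF submodule_q_torsion y(1) y'(1)] by blast
next
  fix a y assume a: "a \<in> carrier R" and "y \<in> line_preimage s"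
  then obtain c where y: "y \<in> q_torsion" "scaled_cong s y c"
    unfolding line_preimage_def by blast
  have "scaled_cong s (a \<odot>\<^bsub>M\<^esub> y) (a \<otimes> c)"
    using scaled_cong_smult[OF y(2) a s q_torsion_carrier[OF y(1)]] .
  thus "a \<odot>\<^bsub>M\<^esub> y \<in> line_preimage s"
    unfolding line_preimage_def using submoduleE(4)[OF submodule_q_torsion a y(1)] by blast
qed

lemma line_preimage_subset_mult:
  assumes "s \<in> carrier R" "t \<in> carrier R"
  shows "line_preimage s \<subseteq> line_preimage (t \<otimes> s)"
  unfolding line_preimage_def using scaled_cong_mult[OF _ assms] q_torsion_carrier by blast

end

text \<open>\<open>S = line_preimage s0\<close> consists of the \<open>y\<close> with \<open>q y \<subseteq> N\<close> and \<open>s0 y \<in> N + R x0\<close>.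
  Reading off the coefficient of \<open>x0\<close> embeds \<open>S/N\<close> into \<open>R/q\<close>; the maximality of \<open>s0\<close> makes \<open>S\<close>
  absorb every \<open>line_preimage t\<close> with \<open>t \<notin> q\<close>, which is what keeps the associated primes of
  \<open>M/S\<close> among those of \<open>M/N\<close>.\<close>

locale saturation = maximal_colon +
  fixes s0
  assumes s0: "s0 \<in> carrier R" "s0 \<notin> q"
    and s0_maximal: "\<And>t. t \<in> carrier R - q \<Longrightarrow> line_preimage s0 \<subseteq> line_preimage t
      \<Longrightarrow> line_preimage t = line_preimage s0"
begin

abbreviation S where "S \<equiv> line_preimage s0"

lemma submodule_S: "submodule S R M"
  using submodule_line_preimage[OF s0(1)] .

lemma S_subset_q_torsion: "S \<subseteq> q_torsion"
  unfolding line_preimage_def by blast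

lemma line_preimage_subset_S:
  assumes t: "t \<in> carrier R" "t \<notin> q"
  shows "line_preimage t \<subseteq> S"
proof -
  have "s0 \<otimes> t \<in> carrier R - q"
    using primeideal.I_prime[OF q_prime s0(1) t(1)] s0 t by auto
  moreover have "S \<subseteq> line_preimage (s0 \<otimes> t)"
    using line_preimage_subset_mult[OF s0(1) t(1)] by (simp add: m_comm[OF t(1) s0(1)])
  ultimately have "line_preimage (s0 \<otimes> t) = S" by (rule s0_maximal)
  thus ?thesis using line_preimage_subset_mult[OF t(1) s0(1)] by simp
qed

lemma N_subset_S: "N \<subseteq> S"
proof
  fix y assume y: "y \<in> N"
  have "y \<in> q_torsion"
    unfolding q_torsion_def using y N_carrier q_carrier submoduleE(4)[OF N] by auto
  thus "y \<in> S" unfolding line_preimage_def using scaled_cong_of_mem[OF y s0(1)] by blast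
qed

lemma x0_in_S: "x0 \<in> S"
proof -
  have "s0 \<odot>\<^bsub>M\<^esub> x0 = \<zero>\<^bsub>M\<^esub> \<oplus>\<^bsub>M\<^esub> s0 \<odot>\<^bsub>M\<^esub> x0" using s0(1) x0(1) by simp
  hence "scaled_cong s0 x0 s0"
    unfolding scaled_cong_def using s0(1) submodule.zero_closed[OF N] by blast
  moreover have "x0 \<in> q_torsion" unfolding q_torsion_def colon_ideal_def using x0(1) by simp
  ultimately show ?thesis unfolding line_preimage_def by blast
qed

definition coeff where "coeff y = (SOME c. scaled_cong s0 y c)"

lemma scaled_cong_coeff: "y \<in> S \<Longrightarrow> scaled_cong s0 y (coeff y)"
  unfolding coeff_def line_preimage_def by (auto intro: someI_ex)

definition quot_coeff where "quot_coeff y = q +> coeff y"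

lemma quot_coeff_eq:
  assumes "y \<in> S" "scaled_cong s0 y c"
  shows "quot_coeff y = q +> c"
  unfolding quot_coeff_def
  using quotient_eq_iff_same_a_r_cos[OF q_ideal] scaled_cong_unique[OF scaled_cong_coeff[OF assms(1)] assms(2)]
    scaled_cong_carrier[OF assms(2)] scaled_cong_carrier[OF scaled_cong_coeff[OF assms(1)]]
  by blast

lemma linear_on_quot_coeff: "linear_on R M (quot_module R q) S quot_coeff"
  unfolding linear_on_def
proof (intro conjI ballI)
  interpret h: ring_hom_cring R "R Quot q" "(+>) q"
    using ideal.rcos_ring_hom_cring[OF q_ideal is_cring] .
  have y_carrier: "y \<in> carrier M" if "y \<in> S" for y
    using that submoduleE(1)[OF submodule_S] by blast
  have c_carrier: "coeff y \<in> carrier R" if "y \<in> S" for y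
    using scaled_cong_carrier[OF scaled_cong_coeff[OF that]] .
  show "quot_coeff \<in> S \<rightarrow> carrier (quot_module R q)"
    unfolding quot_coeff_def using c_carrier h.hom_closed by simp
  fix x y assume x: "x \<in> S" and y: "y \<in> S"
  have "quot_coeff (x \<oplus>\<^bsub>M\<^esub> y) = q +> (coeff x \<oplus> coeff y)"
    by (rule quot_coeff_eq[OF submoduleE(5)[OF submodule_S x y]
          scaled_cong_add[OF scaled_cong_coeff[OF x] scaled_cong_coeff[OF y] s0(1) y_carrier[OF x] y_carrier[OF y]]])
  thus "quot_coeff (x \<oplus>\<^bsub>M\<^esub> y) = quot_coeff x \<oplus>\<^bsub>quot_module R q\<^esub> quot_coeff y"
    using c_carrier[OF x] c_carrier[OF y] unfolding quot_coeff_def by simp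
next
  interpret h: ring_hom_cring R "R Quot q" "(+>) q"
    using ideal.rcos_ring_hom_cring[OF q_ideal is_cring] .
  fix a y assume a: "a \<in> carrier R" and y: "y \<in> S"
  have y_carrier: "y \<in> carrier M" using y submoduleE(1)[OF submodule_S] by blast
  have "quot_coeff (a \<odot>\<^bsub>M\<^esub> y) = q +> (a \<otimes> coeff y)"
    by (rule quot_coeff_eq[OF submoduleE(4)[OF submodule_S a y]
          scaled_cong_smult[OF scaled_cong_coeff[OF y] a s0(1) y_carrier]])
  thus "quot_coeff (a \<odot>\<^bsub>M\<^esub> y) = a \<odot>\<^bsub>quot_module R q\<^esub> quot_coeff y"
    using a scaled_cong_carrier[OF scaled_cong_coeff[OF y]] unfolding quot_coeff_def by simp
qed

lemma quot_coeff_eq_zero_iff: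
  assumes y: "y \<in> S"
  shows "quot_coeff y = \<zero>\<^bsub>quot_module R q\<^esub> \<longleftrightarrow> y \<in> N"
proof
  assume "y \<in> N"
  hence "quot_coeff y = q +> \<zero>" using quot_coeff_eq[OF y scaled_cong_of_mem[OF _ s0(1)]] by simp
  thus "quot_coeff y = \<zero>\<^bsub>quot_module R q\<^esub>"
    using a_rcos_eq_ideal_iff[OF q_ideal R.zero_closed] additive_subgroup.zero_closed[OF ideal.axioms(1)[OF q_ideal]]
    by simp
next
  assume "quot_coeff y = \<zero>\<^bsub>quot_module R q\<^esub>"
  hence coeff_q: "coeff y \<in> q"
    using a_rcos_eq_ideal_iff[OF q_ideal scaled_cong_carrier[OF scaled_cong_coeff[OF y]]]
    unfolding quot_coeff_def by simp
  obtain n where n: "n \<in> N" "s0 \<odot>\<^bsub>M\<^esub> y = n \<oplus>\<^bsub>M\<^esub> coeff y \<odot>\<^bsub>M\<^esub> x0"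
    using scaled_cong_coeff[OF y] unfolding scaled_cong_def by blast
  have "coeff y \<odot>\<^bsub>M\<^esub> x0 \<in> N" using coeff_q unfolding colon_ideal_def by simp
  hence "s0 \<in> colon_ideal R M N y"
    using n submoduleE(5)[OF N] s0(1) unfolding colon_ideal_def by simp
  show "y \<in> N"
  proof (rule ccontr)
    assume "y \<notin> N"
    hence "colon_ideal R M N y = q" using colon_ideal_q_torsion S_subset_q_torsion y by blast
    thus False using \<open>s0 \<in> colon_ideal R M N y\<close> s0(2) by simp
  qed
qed

lemma colon_ideal_S_smult:
  assumes z: "z \<in> carrier M" and t: "t \<in> colon_ideal R M S z" and b: "b \<in> q"
  shows "t \<odot>\<^bsub>M\<^esub> (b \<odot>\<^bsub>M\<^esub> z) \<in> N"
proof -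
  have "t \<odot>\<^bsub>M\<^esub> z \<in> q_torsion" using t S_subset_q_torsion unfolding colon_ideal_def by blast
  hence "b \<odot>\<^bsub>M\<^esub> (t \<odot>\<^bsub>M\<^esub> z) \<in> N" using q_torsionD b by blast
  moreover have "b \<odot>\<^bsub>M\<^esub> (t \<odot>\<^bsub>M\<^esub> z) = t \<odot>\<^bsub>M\<^esub> (b \<odot>\<^bsub>M\<^esub> z)"
    using z q_carrier[OF b] t unfolding colon_ideal_def by (metis (no_types, lifting) mem_Collect_eq smult_assoc1 m_comm)
  ultimately show ?thesis by simp
qed

lemma colon_ideal_S_eq_colon_ideal_N:
  assumes z: "z \<in> carrier M" and P: "primeideal (colon_ideal R M S z) R"
    and b: "b \<in> q" "b \<notin> colon_ideal R M S z"
  shows "colon_ideal R M N (b \<odot>\<^bsub>M\<^esub> z) = colon_ideal R M S z"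
proof
  show "colon_ideal R M N (b \<odot>\<^bsub>M\<^esub> z) \<subseteq> colon_ideal R M S z"
  proof
    fix r assume "r \<in> colon_ideal R M N (b \<odot>\<^bsub>M\<^esub> z)"
    hence r: "r \<in> carrier R" "r \<odot>\<^bsub>M\<^esub> (b \<odot>\<^bsub>M\<^esub> z) \<in> N" unfolding colon_ideal_def by auto
    hence "(r \<otimes> b) \<odot>\<^bsub>M\<^esub> z \<in> S"
      using N_subset_S z q_carrier[OF b(1)] by (auto simp: smult_assoc1)
    hence "r \<otimes> b \<in> colon_ideal R M S z" using r(1) q_carrier[OF b(1)] unfolding colon_ideal_def by simp
    thus "r \<in> colon_ideal R M S z"
      using primeideal.I_prime[OF P r(1) q_carrier[OF b(1)]] b(2) by blast
  qed
  show "colon_ideal R M S z \<subseteq> colon_ideal R M N (b \<odot>\<^bsub>M\<^esub> z)"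
    using colon_ideal_S_smult[OF z _ b(1)] unfolding colon_ideal_def by auto
qed

lemma colon_ideal_S_subset_q:
  assumes z: "z \<in> carrier M" "z \<notin> S" and q_sub: "q \<subseteq> colon_ideal R M S z"
  shows "colon_ideal R M S z \<subseteq> q"
proof (cases "z \<in> q_torsion")
  case True
  show ?thesis
  proof
    fix t assume t: "t \<in> colon_ideal R M S z"
    hence t_carrier: "t \<in> carrier R" unfolding colon_ideal_def by simp
    obtain c where "scaled_cong s0 (t \<odot>\<^bsub>M\<^esub> z) c"
      using t unfolding colon_ideal_def line_preimage_def by blast
    hence "z \<in> line_preimage (s0 \<otimes> t)"
      using scaled_cong_smult_left[OF _ s0(1) t_carrier z(1)] True unfolding line_preimage_def by blast
    show "t \<in> q"
    proof (rule ccontr)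
      assume "t \<notin> q"
      hence "s0 \<otimes> t \<notin> q" using primeideal.I_prime[OF q_prime s0(1) t_carrier] s0(2) by blast
      hence "line_preimage (s0 \<otimes> t) \<subseteq> S" using line_preimage_subset_S s0(1) t_carrier by blast
      thus False using \<open>z \<in> line_preimage (s0 \<otimes> t)\<close> z(2) by blast
    qed
  qed
next
  case False
  then obtain b where b: "b \<in> q" "b \<odot>\<^bsub>M\<^esub> z \<notin> N"
    using z(1) unfolding q_torsion_def by blast
  have "b \<odot>\<^bsub>M\<^esub> z \<in> S" using q_sub b(1) unfolding colon_ideal_def by blast
  hence q_eq: "colon_ideal R M N (b \<odot>\<^bsub>M\<^esub> z) = q"
    using colon_ideal_q_torsion S_subset_q_torsion b(2) by blast
  show ?thesis
    using colon_ideal_S_smult[OF z(1) _ b(1)] unfolding q_eq[symmetric] unfolding colon_ideal_def by auto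
qed

lemma associated_prime_mod_S:
  assumes "associated_prime_mod R M S P"
  shows "associated_prime_mod R M N P"
proof -
  obtain z where z: "z \<in> carrier M" "z \<notin> S" and P: "P = colon_ideal R M S z" and prime: "primeideal P R"
    using assms unfolding associated_prime_mod_def by blast
  show ?thesis
  proof (cases "q \<subseteq> P")
    case True
    hence "P = q" using colon_ideal_S_subset_q[OF z] unfolding P by blast
    thus ?thesis using associated_prime_mod_q by simp
  next
    case False
    then obtain b where b: "b \<in> q" "b \<notin> colon_ideal R M S z" unfolding P by blast
    have eq: "colon_ideal R M N (b \<odot>\<^bsub>M\<^esub> z) = P"
      using colon_ideal_S_eq_colon_ideal_N[OF z(1) prime[unfolded P] b] unfolding P .
    have "\<one> \<notin> P" using prime primeideal.I_notcarr ideal.one_imp_carrier primeideal.axioms(1) by blast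
    moreover have bz: "b \<odot>\<^bsub>M\<^esub> z \<in> carrier M" using z(1) q_carrier[OF b(1)] by simp
    ultimately have "b \<odot>\<^bsub>M\<^esub> z \<notin> N" using eq unfolding colon_ideal_def by auto
    with bz show ?thesis unfolding associated_prime_mod_def using prime eq by blast
  qed
qed

end

context noetherian_fg_module
begin

lemma exists_partition_regular_extension:
  assumes A: "matrix_over R A k l" and N: "submodule N R M" and proper: "N \<noteq> carrier M"
    and PR: "partition_regular_mod M A k l N"
    and not_PR: "\<And>P. associated_prime_mod R M N P \<Longrightarrow> \<not> partition_regular (quot_module R P) A k l"
  shows "\<exists>S. submodule S R M \<and> N \<subset> S \<and> (\<forall>P. associated_prime_mod R M S P \<longrightarrow> associated_prime_mod R M N P)
    \<and> partition_regular_mod M A k l S"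
proof -
  have "carrier M - N \<noteq> {}" using proper submoduleE(1)[OF N] by blast
  hence "\<exists>I\<in>colon_ideal R M N ` (carrier M - N). \<forall>J\<in>colon_ideal R M N ` (carrier M - N). I \<subseteq> J \<longrightarrow> J = I"
    using colon_ideal_is_ideal[OF N] by (intro exists_maximal_ideal) auto
  then obtain x0 where x0: "x0 \<in> carrier M - N"
    and x0_maximal: "\<forall>J\<in>colon_ideal R M N ` (carrier M - N). colon_ideal R M N x0 \<subseteq> J \<longrightarrow> J = colon_ideal R M N x0"
    by (elim bexE imageE) simp
  have colon: "maximal_colon R M N x0"
    using N x0 x0_maximal
    by (intro maximal_colon.intro[OF is_noetherian_fg_module] maximal_colon_axioms.intro) simp_all
  interpret maximal_colon R M N x0 by (rule colon)
  have "\<one> \<in> carrier R - q" using x0 unfolding colon_ideal_def by simp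
  hence "\<exists>T\<in>line_preimage ` (carrier R - q). \<forall>T'\<in>line_preimage ` (carrier R - q). T \<subseteq> T' \<longrightarrow> T' = T"
    using submodule_line_preimage by (intro exists_maximal_submodule) auto
  then obtain s0 where s0: "s0 \<in> carrier R - q"
    and s0_maximal: "\<forall>T\<in>line_preimage ` (carrier R - q). line_preimage s0 \<subseteq> T \<longrightarrow> T = line_preimage s0"
    by (elim bexE imageE) simp
  interpret saturation R M N x0 s0
    using s0 s0_maximal by (intro saturation.intro[OF colon] saturation_axioms.intro) simp_all
  have "partition_regular_mod M A k l S"
    using partition_regular_mod_extend[OF is_module quot_module_is_module[OF q_ideal] A submodule_S
        N_subset_S linear_on_quot_coeff quot_coeff_eq_zero_iff PR not_PR[OF associated_prime_mod_q]] .
  moreover have "N \<subset> S" using N_subset_S x0_in_S x0(2) by blast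
  ultimately show ?thesis using submodule_S associated_prime_mod_S by blast
qed

lemma partition_regular_imp_associated_prime:
  assumes A: "matrix_over R A k l" and PR: "partition_regular M A k l"
  shows "\<exists>P. associated_prime R M P \<and> partition_regular (quot_module R P) A k l"
proof (rule ccontr)
  assume none: "\<not> ?thesis"
  define F where "F = {N. submodule N R M \<and> (\<forall>P. associated_prime_mod R M N P \<longrightarrow> associated_prime R M P)
    \<and> partition_regular_mod M A k l N}"
  have "{\<zero>\<^bsub>M\<^esub>} \<in> F"
    unfolding F_def using PR[unfolded partition_regular_iff_mod_zero[OF is_module]]
    by (simp add: zero_submodule associated_prime_mod_zero_imp)
  hence "\<exists>N\<in>F. \<forall>S\<in>F. N \<subseteq> S \<longrightarrow> S = N"
    by (intro exists_maximal_submodule) (auto simp: F_def)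
  then obtain N where "N \<in> F" and N_maximal: "\<forall>S\<in>F. N \<subseteq> S \<longrightarrow> S = N" by (elim bexE)
  hence N: "submodule N R M" "\<And>P. associated_prime_mod R M N P \<Longrightarrow> associated_prime R M P"
    "partition_regular_mod M A k l N"
    unfolding F_def by simp_all
  have proper: "N \<noteq> carrier M" using N(3) not_partition_regular_mod_carrier by metis
  have not_PR: "\<not> partition_regular (quot_module R P) A k l" if "associated_prime_mod R M N P" for P
    using none N(2)[OF that] by blast
  have "\<exists>S. submodule S R M \<and> N \<subset> S \<and> (\<forall>P. associated_prime_mod R M S P \<longrightarrow> associated_prime_mod R M N P)
      \<and> partition_regular_mod M A k l S"
    by (rule exists_partition_regular_extension[OF A N(1) proper N(3)]) (rule not_PR)
  then obtain S where S: "submodule S R M" "N \<subset> S"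
    "\<forall>P. associated_prime_mod R M S P \<longrightarrow> associated_prime_mod R M N P" "partition_regular_mod M A k l S"
    by (elim exE conjE)
  have "S \<in> F" unfolding F_def using S N(2) by simp
  thus False using N_maximal S(2) by blast
qed

end

theorem theorem2p1:
  fixes R :: "'a ring" and M :: "('a, 'b) module"
    and A :: "nat \<Rightarrow> nat \<Rightarrow> 'a" and k l :: nat
  assumes "cring R" and "noetherian_ring R"
    and "module R M" and "finitely_generated_module R M"
    and "matrix_over R A k l"
  shows "partition_regular M A k l \<longleftrightarrow>
         (\<exists>P. associated_prime R M P \<and> partition_regular (quot_module R P) A k l)"
proof -
  interpret noetherian_fg_module R M
    using assms(2-4) by (intro noetherian_fg_module.intro noetherian_fg_module_axioms.intro)
  show ?thesis
    using partition_regular_imp_associated_prime[OF assms(5)]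
      partition_regular_of_associated_prime[OF assms(3,5)] by blast
qed

end
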